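(* Let $R_1,R_2$ be Reeb graphs, $\varepsilon\ge0$, and let $v_1\in V(R_1)$, $v_2\in V(R_2)$ be nodes that are either both maxima-or-split nodes or both minima-or-join nodes. Let $\phi:R_1\to R_2^\varepsilon$ be a morphism with $\phi(v_1)\in P^\varepsilon(v_2)$. Then for every $\delta\ge0$, $$\phi^\delta(s_\delta(v_1))\in P^\varepsilon(s_\delta(v_2)),$$ where $P^\varepsilon(s_\delta(v_2))\subset (R_2^\delta)^\varepsilon=R_2^{\varepsilon+\delta}$.
   Context: A Reeb graph $R=(G,f)$ is a finite multigraph $G$ (identified with its geometric realization) with continuous $f$ strictly monotone on each edge and injective on nodes. Split node: up-degree $>1$, down-degree $1$; join node: up-degree $1$, down-degree $>1$; maximum: up-degree $0$, down-degree $1$; minimum: up-degree $1$, down-degree $0$ (up/down-degree = number of incident edges along which $f$ increases/decreases away from the node; degenerate nodes are superpositions of such nodes). A morphism is a continuous map $h$ with $f_2\circ h=f_1$. For $\delta\ge0$, $\mathcal T^\delta(R)=G\times[-\delta,\delta]$ with $F^\delta(x,t)=f(x)+t$; $R^\delta$ is its Reeb graph with quotient map $\pi$; $(R^\varepsilon)^\delta$ is identified with $R^{\varepsilon+\delta}$. For a morphism $\phi:R_1\to R_2^\varepsilon$, $\phi^\delta:R_1^\delta\to R_2^{\varepsilon+\delta}$ is induced by $(x,t)\mapsto(\phi(x),t)$ from $\mathcal T^\delta(R_1)$ to $\mathcal T^\delta(R_2^\varepsilon)$. For a point $x$ of a Reeb graph $R$, $P^\varepsilon(x)=\pi(\{x\}\times[-\varepsilon,\varepsilon])\subset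 R^\varepsilon$. For a node $v$ that is a maximum or split node, $s_\delta(v)=\pi(v,\delta)\in R^\delta$; for a minimum or join node, $s_\delta(v)=\pi(v,-\delta)\in R^\delta$. *)

theory Defs
  imports "HOL-Analysis.Analysis"
begin

record ('v,'e) reeb =
  nodes :: "'v set"
  edges :: "'e set"
  lo :: "'e \<Rightarrow> 'v"
  hi :: "'e \<Rightarrow> 'v"
  ht :: "'v \<Rightarrow> real"

definition reeb_graph :: "('v,'e) reeb \<Rightarrow> bool" where
  "reeb_graph R \<longleftrightarrow> finite (nodes R) \<and> finite (edges R) \<and> inj_on (ht R) (nodes R) \<and>
     (\<forall>e\<in>edges R. lo R e \<in> nodes R \<and> hi R e \<in> nodes R \<and> ht R (lo R e) < ht R (hi R e))"

text \<open>Points of the geometric realization: a node, or an interior point of an edge,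
  given by its f-value (f is strictly monotone on each edge).\<close>
datatype ('v,'e) rpt = Nd 'v | Ed 'e real

definition rcarrier :: "('v,'e) reeb \<Rightarrow> ('v,'e) rpt set" where
  "rcarrier R = Nd ` nodes R \<union>
     {Ed e h | e h. e \<in> edges R \<and> ht R (lo R e) < h \<and> h < ht R (hi R e)}"

fun fval :: "('v,'e) reeb \<Rightarrow> ('v,'e) rpt \<Rightarrow> real" where
  "fval R (Nd v) = ht R v"
| "fval R (Ed e h) = h"

text \<open>Characteristic map of the closed edge e from the interval of heights.\<close>
definition emb :: "('v,'e) reeb \<Rightarrow> 'e \<Rightarrow> real \<Rightarrow> ('v,'e) rpt" where
  "emb R e h = (if h = ht R (lo R e) then Nd (lo R e)
                else if h = ht R (hi R e) then Nd (hi R e) else Ed e h)"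

text \<open>Topology of the geometric realization (quotient of the disjoint union of
  the closed edges and the nodes).\<close>
definition reeb_space :: "('v,'e) reeb \<Rightarrow> ('v,'e) rpt topology" where
  "reeb_space R = topology (\<lambda>U. U \<subseteq> rcarrier R \<and>
     (\<forall>e\<in>edges R. openin (top_of_set {ht R (lo R e)..ht R (hi R e)})
        {h \<in> {ht R (lo R e)..ht R (hi R e)}. emb R e h \<in> U}))"

definition updeg :: "('v,'e) reeb \<Rightarrow> 'v \<Rightarrow> nat" where
  "updeg R v = card {e \<in> edges R. lo R e = v}"

definition downdeg :: "('v,'e) reeb \<Rightarrow> 'v \<Rightarrow> nat" where
  "downdeg R v = card {e \<in> edges R. hi R e = v}"

definition max_or_split :: "('v,'e) reeb \<Rightarrow> 'v \<Rightarrow> bool" where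
  "max_or_split R v \<longleftrightarrow> v \<in> nodes R \<and> downdeg R v = 1 \<and> (updeg R v = 0 \<or> updeg R v > 1)"

definition min_or_join :: "('v,'e) reeb \<Rightarrow> 'v \<Rightarrow> bool" where
  "min_or_join R v \<longleftrightarrow> v \<in> nodes R \<and> updeg R v = 1 \<and> (downdeg R v = 0 \<or> downdeg R v > 1)"

definition reeb_rel :: "'a topology \<Rightarrow> ('a \<Rightarrow> real) \<Rightarrow> 'a \<Rightarrow> 'a \<Rightarrow> bool" where
  "reeb_rel X F p q \<longleftrightarrow> p \<in> topspace X \<and> q \<in> topspace X \<and> F p = F q \<and>
     connected_component_of (subtopology X {z \<in> topspace X. F z = F p}) p q"

definition reeb_class :: "'a topology \<Rightarrow> ('a \<Rightarrow> real) \<Rightarrow> 'a \<Rightarrow> 'a set" where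
  "reeb_class X F p = Collect (reeb_rel X F p)"

definition reeb_top :: "'a topology \<Rightarrow> ('a \<Rightarrow> real) \<Rightarrow> 'a set topology" where
  "reeb_top X F = topology (\<lambda>U. U \<subseteq> reeb_class X F ` topspace X \<and> openin X (\<Union>U))"

definition reeb_fun :: "('a \<Rightarrow> real) \<Rightarrow> 'a set \<Rightarrow> real" where
  "reeb_fun F S = F (SOME p. p \<in> S)"

definition thicken :: "'a topology \<Rightarrow> real \<Rightarrow> ('a \<times> real) topology" where
  "thicken X \<delta> = prod_topology X (top_of_set {-\<delta>..\<delta>})"

definition thicken_fun :: "('a \<Rightarrow> real) \<Rightarrow> 'a \<times> real \<Rightarrow> real" where
  "thicken_fun F = (\<lambda>(x,t). F x + t)"

text \<open>R^\<delta> as a space, its function, and the quotient map \<pi>(x,t)\<close>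
definition smooth :: "'a topology \<Rightarrow> ('a \<Rightarrow> real) \<Rightarrow> real \<Rightarrow> ('a \<times> real) set topology" where
  "smooth X F \<delta> = reeb_top (thicken X \<delta>) (thicken_fun F)"

definition smooth_fun :: "('a \<Rightarrow> real) \<Rightarrow> ('a \<times> real) set \<Rightarrow> real" where
  "smooth_fun F = reeb_fun (thicken_fun F)"

definition proj :: "'a topology \<Rightarrow> ('a \<Rightarrow> real) \<Rightarrow> real \<Rightarrow> 'a \<Rightarrow> real \<Rightarrow> ('a \<times> real) set" where
  "proj X F \<delta> x t = reeb_class (thicken X \<delta>) (thicken_fun F) (x, t)"

definition Pset :: "'a topology \<Rightarrow> ('a \<Rightarrow> real) \<Rightarrow> real \<Rightarrow> 'a \<Rightarrow> ('a \<times> real) set set" where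
  "Pset X F \<epsilon> x = {proj X F \<epsilon> x t | t. t \<in> {-\<epsilon>..\<epsilon>}}"

text \<open>The identification (R^\<epsilon>)^\<delta> = R^(\<epsilon>+\<delta>): \<pi>(\<pi>(x,s),t) \<mapsto> \<pi>(x,s+t).\<close>
definition ident :: "'a topology \<Rightarrow> ('a \<Rightarrow> real) \<Rightarrow> real \<Rightarrow> real \<Rightarrow>
    (('a \<times> real) set \<times> real) set \<Rightarrow> ('a \<times> real) set" where
  "ident X F \<epsilon> \<delta> Q = (let z = (SOME z. z \<in> Q); p = (SOME p. p \<in> fst z)
                       in proj X F (\<epsilon> + \<delta>) (fst p) (snd p + snd z))"

definition morphism :: "'a topology \<Rightarrow> ('a \<Rightarrow> real) \<Rightarrow> 'b topology \<Rightarrow> ('b \<Rightarrow> real) \<Rightarrow> ('a \<Rightarrow> 'b) \<Rightarrow> bool" where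
  "morphism X F Y G h \<longleftrightarrow> continuous_map X Y h \<and> (\<forall>x\<in>topspace X. G (h x) = F x)"

text \<open>For \<phi> : R1 \<rightarrow> R2^\<epsilon>, the map \<phi>^\<delta> : R1^\<delta> \<rightarrow> R2^(\<epsilon>+\<delta>), induced by (x,t) \<mapsto> (\<phi> x, t)
  into (R2^\<epsilon>)^\<delta>, followed by the identification with R2^(\<epsilon>+\<delta>).\<close>
definition smooth_morph :: "'a topology \<Rightarrow> ('a \<Rightarrow> real) \<Rightarrow> 'b topology \<Rightarrow> ('b \<Rightarrow> real) \<Rightarrow> real \<Rightarrow> real \<Rightarrow>
    ('a \<Rightarrow> ('b \<times> real) set) \<Rightarrow> ('a \<times> real) set \<Rightarrow> ('b \<times> real) set" where
  "smooth_morph X1 F1 X2 F2 \<epsilon> \<delta> \<phi> Q =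
     ident X2 F2 \<epsilon> \<delta>
       (let z = (SOME z. z \<in> Q) in proj (smooth X2 F2 \<epsilon>) (smooth_fun F2) \<delta> (\<phi> (fst z)) (snd z))"

definition sdelta :: "('v,'e) reeb \<Rightarrow> real \<Rightarrow> 'v \<Rightarrow> (('v,'e) rpt \<times> real) set" where
  "sdelta R \<delta> v = (if max_or_split R v then proj (reeb_space R) (fval R) \<delta> (Nd v) \<delta>
                    else proj (reeb_space R) (fval R) \<delta> (Nd v) (-\<delta>))"

end

theory Submission
  imports Defs
begin

text \<open>
  Since v1 and v2 are nodes of the same type, s_\<delta>(v1) and s_\<delta>(v2) are the classes of
  (v1, \<tau>) and (v2, \<tau>) for one and the same \<tau> = \<plusminus>\<delta>.  If \<phi>(v1) is the class of (v2, t), then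
  \<phi>^\<delta>(s_\<delta>(v1)) and the point of P^\<epsilon>(s_\<delta>(v2)) at height t are both identified with the
  class of (v2, t + \<tau>) in R2^(\<epsilon>+\<delta>).

  The substance is that the identification (R^\<epsilon>)^\<delta> = R^(\<epsilon>+\<delta>), \<pi>(\<pi>(x,s),t) \<mapsto> \<pi>(x,s+t),
  does not depend on the representatives.  On a level set of (R^\<epsilon>)^\<delta>, send a point (B, b)
  to the connected component of the corresponding level set of R^(\<epsilon>+\<delta>) that contains the
  points (x, s + b) for (x, s) \<in> B.  This map has closed fibres, and finitely many values because
  a level set of a thickened Reeb graph is covered by finitely many connected pieces, one for each
  node and each edge; hence it is constant on the connected components of the level set.
\<close>

section \<open>Connected components\<close>

lemma connected_component_of_set_eq_iff:
  assumes "x \<in> topspace X"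
  shows "connected_component_of_set X x = connected_component_of_set X y \<longleftrightarrow> connected_component_of X x y"
proof
  assume "connected_component_of_set X x = connected_component_of_set X y"
  moreover have "x \<in> connected_component_of_set X x"
    using assms by (simp add: connected_component_of_refl)
  ultimately show "connected_component_of X x y"
    by (simp add: connected_component_of_sym)
next
  assume "connected_component_of X x y"
  then show "connected_component_of_set X x = connected_component_of_set X y"
    by (simp add: connected_component_of_equiv)
qed

lemma connected_components_of_eq_component:
  assumes "x \<in> C" "C \<in> connected_components_of X"
  shows "C = connected_component_of_set X x"
proof -
  obtain w where w: "w \<in> topspace X" "C = connected_component_of_set X w"
    using assms(2) unfolding connected_components_of_def by blast
  then have "connected_component_of X w x"
    using assms(1) by simp
  then show ?thesis
    unfolding w(2) by (rule connected_component_of_set_eq_iff[OF w(1), THEN iffD2])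
qed

lemma connected_component_of_imp_eq_finite_closed_fibres:
  assumes "finite (f ` topspace X)"
    and "\<And>x. x \<in> topspace X \<Longrightarrow> closedin X {y \<in> topspace X. f y = f x}"
    and "connected_component_of X x y"
  shows "f x = f y"
proof -
  let ?fibre = "\<lambda>v. {z \<in> topspace X. f z = v}"
  have x: "x \<in> topspace X"
    using connected_component_in_topspace[OF assms(3)] by blast
  have "topspace X - ?fibre (f x) = \<Union>(?fibre ` (f ` topspace X - {f x}))"
    by auto
  moreover have "closedin X (\<Union>(?fibre ` (f ` topspace X - {f x})))"
  proof (rule closedin_Union)
    show "finite (?fibre ` (f ` topspace X - {f x}))"
      using assms(1) by simp
    show "closedin X T" if "T \<in> ?fibre ` (f ` topspace X - {f x})" for T
      using that assms(2) by blast
  qed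
  ultimately have "openin X (?fibre (f x))"
    by (simp add: openin_closedin_eq)
  moreover have "\<forall>T. x \<in> T \<and> closedin X T \<and> openin X T \<longrightarrow> y \<in> T"
    using connected_imp_quasi_component_of[OF assms(3)] by (simp add: quasi_component_of)
  ultimately have "y \<in> ?fibre (f x)"
    using x assms(2)[OF x] by (auto dest: spec[of _ "?fibre (f x)"])
  then show ?thesis by simp
qed

lemma finite_connected_components_of_connected_cover:
  assumes "finite P" "\<And>C. C \<in> P \<Longrightarrow> connectedin X C" "topspace X \<subseteq> \<Union>P"
  shows "finite (connected_components_of X)"
proof -
  have "connected_components_of X \<subseteq> (\<lambda>C. connected_component_of_set X (SOME y. y \<in> C)) ` P"
  proof
    fix K assume "K \<in> connected_components_of X"
    then obtain x where x: "x \<in> topspace X" "K = connected_component_of_set X x"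
      unfolding connected_components_of_def by blast
    then obtain C where C: "C \<in> P" "x \<in> C"
      using assms(3) by blast
    then have "(SOME y. y \<in> C) \<in> C"
      by (intro someI)
    then have "connected_component_of X x (SOME y. y \<in> C)"
      unfolding connected_component_of_def using assms(2)[OF C(1)] C(2) by blast
    then have "K = connected_component_of_set X (SOME y. y \<in> C)"
      unfolding x(2) by (rule connected_component_of_set_eq_iff[OF x(1), THEN iffD2])
    then show "K \<in> (\<lambda>C. connected_component_of_set X (SOME y. y \<in> C)) ` P"
      using C(1) by blast
  qed
  then show ?thesis
    using assms(1) finite_subset by blast
qed

section \<open>Reeb quotients\<close>

definition level_set :: "'a topology \<Rightarrow> ('a \<Rightarrow> real) \<Rightarrow> real \<Rightarrow> 'a set" where
  "level_set X F c = {x \<in> topspace X. F x = c}"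

lemma reeb_rel_iff:
  "reeb_rel X F p q \<longleftrightarrow> p \<in> topspace X \<and> q \<in> topspace X \<and> F p = F q \<and>
     connected_component_of (subtopology X (level_set X F (F p))) p q"
  by (simp add: reeb_rel_def level_set_def)

lemma reeb_rel_imp_topspace:
  "reeb_rel X F p q \<Longrightarrow> p \<in> topspace X \<and> q \<in> topspace X \<and> F p = F q"
  by (simp add: reeb_rel_def)

lemma reeb_rel_refl: "p \<in> topspace X \<Longrightarrow> reeb_rel X F p p"
  by (simp add: reeb_rel_def connected_component_of_refl)

lemma reeb_rel_sym: "reeb_rel X F p q \<Longrightarrow> reeb_rel X F q p"
  unfolding reeb_rel_def by (auto simp: connected_component_of_sym)

lemma reeb_rel_trans: "reeb_rel X F p q \<Longrightarrow> reeb_rel X F q r \<Longrightarrow> reeb_rel X F p r"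
  unfolding reeb_rel_def by (auto intro: connected_component_of_trans)

lemma mem_reeb_class: "q \<in> reeb_class X F p \<longleftrightarrow> reeb_rel X F p q"
  by (simp add: reeb_class_def)

lemma reeb_class_self: "p \<in> topspace X \<Longrightarrow> p \<in> reeb_class X F p"
  by (simp add: mem_reeb_class reeb_rel_refl)

lemma reeb_class_subset_topspace: "reeb_class X F p \<subseteq> topspace X"
  by (auto simp: mem_reeb_class reeb_rel_def)

lemma reeb_class_eq: "reeb_rel X F p q \<Longrightarrow> reeb_class X F p = reeb_class X F q"
  unfolding reeb_class_def by (blast intro: reeb_rel_trans reeb_rel_sym)

lemma reeb_class_eq_of_mem:
  assumes "A \<in> reeb_class X F ` topspace X" "x \<in> A"
  shows "A = reeb_class X F x"
  using assms reeb_class_eq[of X F _ x] unfolding mem_reeb_class[symmetric] by blast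

lemma Union_reeb_classes: "\<Union> (reeb_class X F ` topspace X) = topspace X"
  using reeb_class_self reeb_class_subset_topspace by fastforce

lemma istopology_reeb_top: "istopology (\<lambda>U. U \<subseteq> reeb_class X F ` topspace X \<and> openin X (\<Union>U))"
  unfolding istopology_def
proof (rule conjI; intro allI impI)
  fix S T
  assume S: "S \<subseteq> reeb_class X F ` topspace X \<and> openin X (\<Union>S)"
    and T: "T \<subseteq> reeb_class X F ` topspace X \<and> openin X (\<Union>T)"
  have "\<Union>S \<inter> \<Union>T \<subseteq> \<Union>(S \<inter> T)"
  proof
    fix x assume "x \<in> \<Union>S \<inter> \<Union>T"
    then obtain A B where AB: "A \<in> S" "B \<in> T" "x \<in> A" "x \<in> B" by blast
    then have "A = B"
      using S T reeb_class_eq_of_mem[of A X F x] reeb_class_eq_of_mem[of B X F x] by blast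
    with AB show "x \<in> \<Union>(S \<inter> T)" by blast
  qed
  then have "\<Union>(S \<inter> T) = \<Union>S \<inter> \<Union>T" by blast
  then show "S \<inter> T \<subseteq> reeb_class X F ` topspace X \<and> openin X (\<Union>(S \<inter> T))"
    using S T by (simp add: le_infI1 openin_Int)
next
  fix K assume K: "\<forall>S\<in>K. S \<subseteq> reeb_class X F ` topspace X \<and> openin X (\<Union>S)"
  have "\<Union>(\<Union>K) = \<Union>(Union ` K)" by auto
  then show "\<Union>K \<subseteq> reeb_class X F ` topspace X \<and> openin X (\<Union>(\<Union>K))"
    using K openin_Union[of "Union ` K" X] by auto
qed

lemma openin_reeb_top:
  "openin (reeb_top X F) U \<longleftrightarrow> U \<subseteq> reeb_class X F ` topspace X \<and> openin X (\<Union>U)"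
  by (simp only: reeb_top_def topology_inverse'[OF istopology_reeb_top])

lemma topspace_reeb_top: "topspace (reeb_top X F) = reeb_class X F ` topspace X"
proof -
  have "openin (reeb_top X F) (reeb_class X F ` topspace X)"
    by (simp add: openin_reeb_top Union_reeb_classes)
  moreover have "S \<subseteq> reeb_class X F ` topspace X" if "openin (reeb_top X F) S" for S
    using that by (simp add: openin_reeb_top)
  ultimately show ?thesis
    unfolding topspace_def by (intro subset_antisym Union_least Union_upper) auto
qed

lemma closedin_reeb_top:
  assumes "W \<subseteq> reeb_class X F ` topspace X" "closedin X (\<Union>W)"
  shows "closedin (reeb_top X F) W"
proof -
  have "\<Union>(reeb_class X F ` topspace X - W) = topspace X - \<Union>W"
  proof (intro subset_antisym subsetI)
    fix x assume "x \<in> \<Union>(reeb_class X F ` topspace X - W)"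
    then obtain A where A: "A \<in> reeb_class X F ` topspace X" "A \<notin> W" "x \<in> A" by blast
    have "x \<notin> B" if "B \<in> W" for B
    proof
      assume "x \<in> B"
      then have "B = reeb_class X F x"
        using that assms(1) by (intro reeb_class_eq_of_mem) auto
      then show False
        using that A reeb_class_eq_of_mem[OF A(1,3)] by simp
    qed
    moreover have "x \<in> topspace X"
      using A(1,3) reeb_class_subset_topspace by fastforce
    ultimately show "x \<in> topspace X - \<Union>W" by blast
  next
    fix x assume x: "x \<in> topspace X - \<Union>W"
    then have "reeb_class X F x \<notin> W" "x \<in> reeb_class X F x"
      using reeb_class_self[of x X F] by auto
    then show "x \<in> \<Union>(reeb_class X F ` topspace X - W)" using x by blast
  qed
  moreover have "openin X (topspace X - \<Union>W)"
    using assms(2) by (simp add: closedin_def)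
  ultimately show ?thesis
    using assms(1) unfolding closedin_def topspace_reeb_top openin_reeb_top by auto
qed

lemma reeb_fun_eq: "\<lbrakk>A \<in> reeb_class X F ` topspace X; q \<in> A\<rbrakk> \<Longrightarrow> reeb_fun F A = F q"
proof -
  assume A: "A \<in> reeb_class X F ` topspace X" and q: "q \<in> A"
  from q have "(SOME p. p \<in> A) \<in> A" by (rule someI)
  then show ?thesis
    unfolding reeb_fun_def using A q by (auto simp: mem_reeb_class dest!: reeb_rel_imp_topspace)
qed

lemma reeb_rel_continuous_map:
  assumes "continuous_map X Y h" "\<And>x. x \<in> topspace X \<Longrightarrow> G (h x) = F x + k"
    and "reeb_rel X F p q"
  shows "reeb_rel Y G (h p) (h q)"
proof -
  let ?L = "level_set X F (F p)" and ?M = "level_set Y G (G (h p))"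
  have pq: "p \<in> topspace X" "q \<in> topspace X" "F p = F q"
    and cc: "connected_component_of (subtopology X ?L) p q"
    using assms(3) by (auto simp: reeb_rel_iff)
  have "h ` topspace (subtopology X ?L) \<subseteq> ?M"
    using assms(1,2) pq by (auto simp: continuous_map_def level_set_def)
  then have "continuous_map (subtopology X ?L) (subtopology Y ?M) h"
    by (simp add: continuous_map_in_subtopology continuous_map_from_subtopology[OF assms(1)]
        image_subset_iff_funcset)
  from connected_component_of_continuous_image[OF this cc]
  show ?thesis using pq assms unfolding reeb_rel_iff by (auto simp: continuous_map_def)
qed

section \<open>Thickening and smoothing\<close>

lemma topspace_thicken: "topspace (thicken X d) = topspace X \<times> {-d..d}"
  by (simp add: thicken_def)

lemma thicken_fun_apply [simp]: "thicken_fun F (x, t) = F x + t"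
  by (simp add: thicken_fun_def)

lemma continuous_map_thicken_snd: "continuous_map (thicken X d) euclideanreal snd"
  unfolding thicken_def
  using continuous_map_snd continuous_map_in_subtopology by blast

lemma continuous_map_thicken_fun:
  assumes "continuous_map X euclideanreal F"
  shows "continuous_map (thicken X d) euclideanreal (thicken_fun F)"
proof -
  have "continuous_map (thicken X d) euclideanreal (\<lambda>z. F (fst z) + snd z)"
    unfolding thicken_def
    by (intro continuous_map_add continuous_map_compose[OF continuous_map_fst assms, unfolded o_def]
        continuous_map_thicken_snd[unfolded thicken_def])
  then show ?thesis by (simp add: thicken_fun_def case_prod_unfold)
qed

lemma reeb_rel_thicken_shift:
  assumes "\<bar>k\<bar> \<le> \<delta>" "reeb_rel (thicken X \<epsilon>) (thicken_fun F) p q"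
  shows "reeb_rel (thicken X (\<epsilon> + \<delta>)) (thicken_fun F) (fst p, snd p + k) (fst q, snd q + k)"
proof -
  have "continuous_map (thicken X \<epsilon>) (thicken X (\<epsilon> + \<delta>)) (\<lambda>z. (fst z, snd z + k))"
    unfolding thicken_def
  proof (intro continuous_map_pairedI continuous_map_fst)
    show "continuous_map (prod_topology X (top_of_set {-\<epsilon>..\<epsilon>})) (top_of_set {-(\<epsilon> + \<delta>)..\<epsilon> + \<delta>})
            (\<lambda>z. snd z + k)"
      unfolding continuous_map_in_subtopology using assms(1)
      by (auto intro!: continuous_map_add continuous_map_thicken_snd[unfolded thicken_def])
  qed
  then show ?thesis
    by (rule reeb_rel_continuous_map[OF _ _ assms(2), where k=k]) (auto simp: topspace_thicken)
qed

lemma topspace_smooth: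
  "topspace (smooth X F \<epsilon>) = reeb_class (thicken X \<epsilon>) (thicken_fun F) ` topspace (thicken X \<epsilon>)"
  by (simp add: smooth_def topspace_reeb_top)

lemma mem_smooth_class:
  assumes "A \<in> topspace (smooth X F \<epsilon>)" "(x, s) \<in> A"
  shows "x \<in> topspace X" "\<bar>s\<bar> \<le> \<epsilon>" "smooth_fun F A = F x + s"
proof -
  have A: "A \<in> reeb_class (thicken X \<epsilon>) (thicken_fun F) ` topspace (thicken X \<epsilon>)"
    using assms(1) by (simp add: topspace_smooth)
  then have "(x, s) \<in> topspace (thicken X \<epsilon>)"
    using assms(2) reeb_class_subset_topspace by fastforce
  then show "x \<in> topspace X" "\<bar>s\<bar> \<le> \<epsilon>" by (auto simp: topspace_thicken)
  show "smooth_fun F A = F x + s"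
    unfolding smooth_fun_def using reeb_fun_eq[OF A assms(2)] by simp
qed

lemma smooth_class_subset_topspace:
  "A \<in> topspace (smooth X F \<epsilon>) \<Longrightarrow> A \<subseteq> topspace (thicken X \<epsilon>)"
  unfolding topspace_smooth using reeb_class_subset_topspace by fastforce

lemma smooth_class_reeb_rel:
  assumes "A \<in> topspace (smooth X F \<epsilon>)" "p \<in> A" "q \<in> A"
  shows "reeb_rel (thicken X \<epsilon>) (thicken_fun F) p q"
proof -
  obtain r where "A = reeb_class (thicken X \<epsilon>) (thicken_fun F) r"
    using assms(1) by (auto simp: topspace_smooth)
  then show ?thesis
    using assms(2,3) reeb_rel_sym reeb_rel_trans by (metis mem_reeb_class)
qed

lemma smooth_class_nonempty: "A \<in> topspace (smooth X F \<epsilon>) \<Longrightarrow> \<exists>p. p \<in> A"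
  unfolding topspace_smooth using reeb_class_self by fastforce

section \<open>Iterated smoothing\<close>

locale level_lift =
  fixes X :: "'a topology" and F :: "'a \<Rightarrow> real" and \<epsilon> \<delta> c :: real
  assumes continuous_F: "continuous_map X euclideanreal F"
begin

abbreviation lifted_level :: "('a \<times> real) topology" where
  "lifted_level \<equiv> subtopology (thicken X (\<epsilon> + \<delta>)) (level_set (thicken X (\<epsilon> + \<delta>)) (thicken_fun F) c)"

abbreviation smoothed_level :: "(('a \<times> real) set \<times> real) set" where
  "smoothed_level \<equiv> level_set (thicken (smooth X F \<epsilon>) \<delta>) (thicken_fun (smooth_fun F)) c"

text \<open>
  A point (B, b) of the c-level of (X^\<epsilon>)^\<delta> and (x, s) \<in> B give the point (x, s + b) of the
  c-level of X^(\<epsilon>+\<delta>); as F x + s + b = c, this is (x, c - F x), which does not involve b.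
\<close>

definition lift_point :: "'a \<times> real \<Rightarrow> 'a \<times> real" where
  "lift_point p = (fst p, c - F (fst p))"

definition lift_component :: "('a \<times> real) set \<times> real \<Rightarrow> ('a \<times> real) set" where
  "lift_component z = connected_component_of_set lifted_level (lift_point (SOME p. p \<in> fst z))"

lemma lift_point_connected:
  assumes "reeb_rel (thicken X \<epsilon>) (thicken_fun F) p q" "\<bar>c - thicken_fun F p\<bar> \<le> \<delta>"
  shows "connected_component_of lifted_level (lift_point p) (lift_point q)"
proof -
  define k where "k = c - thicken_fun F p"
  have "thicken_fun F q = thicken_fun F p"
    using reeb_rel_imp_topspace[OF assms(1)] by simp
  then have lift: "lift_point p = (fst p, snd p + k)" "lift_point q = (fst q, snd q + k)"
    by (auto simp: lift_point_def k_def thicken_fun_def case_prod_unfold)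
  have "reeb_rel (thicken X (\<epsilon> + \<delta>)) (thicken_fun F) (lift_point p) (lift_point q)"
    unfolding lift using assms by (intro reeb_rel_thicken_shift) (simp_all add: k_def)
  moreover have "thicken_fun F (lift_point p) = c"
    by (simp add: lift_point_def)
  ultimately show ?thesis
    by (simp add: reeb_rel_iff)
qed

lemma mem_smoothed_level:
  "(B, b) \<in> smoothed_level \<longleftrightarrow> B \<in> topspace (smooth X F \<epsilon>) \<and> b \<in> {-\<delta>..\<delta>} \<and> smooth_fun F B + b = c"
  by (auto simp: level_set_def topspace_thicken)

lemma lift_point_smoothed_level:
  assumes "(B, b) \<in> smoothed_level" "p \<in> B"
  shows "lift_point p = (fst p, snd p + b)" "\<bar>c - thicken_fun F p\<bar> \<le> \<delta>"
    "lift_point p \<in> topspace lifted_level"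
proof -
  have B: "B \<in> topspace (smooth X F \<epsilon>)" "\<bar>b\<bar> \<le> \<delta>" "smooth_fun F B + b = c"
    using assms(1) by (auto simp: level_set_def topspace_thicken)
  obtain x s where p: "p = (x, s)" by fastforce
  have "x \<in> topspace X" "\<bar>s\<bar> \<le> \<epsilon>" "smooth_fun F B = F x + s"
    using mem_smooth_class[OF B(1) assms(2)[unfolded p]] by auto
  then show "lift_point p = (fst p, snd p + b)" "\<bar>c - thicken_fun F p\<bar> \<le> \<delta>"
    "lift_point p \<in> topspace lifted_level"
    using B p by (auto simp: lift_point_def level_set_def topspace_thicken abs_le_iff)
qed

lemma smoothed_level_nonempty:
  assumes "z \<in> smoothed_level"
  obtains p where "p \<in> fst z"
  using assms smooth_class_nonempty by (fastforce simp: level_set_def topspace_thicken)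

lemma lift_component_eq:
  assumes "z \<in> smoothed_level" "p \<in> fst z"
  shows "lift_component z = connected_component_of_set lifted_level (lift_point p)"
proof -
  obtain B b where z: "z = (B, b)" by fastforce
  let ?p = "SOME p. p \<in> B"
  have zB: "(B, b) \<in> smoothed_level" and p: "p \<in> B"
    using assms z by simp_all
  from p have p': "?p \<in> B" by (rule someI)
  have "B \<in> topspace (smooth X F \<epsilon>)"
    using zB by (simp add: level_set_def topspace_thicken)
  then have "reeb_rel (thicken X \<epsilon>) (thicken_fun F) p ?p"
    using p p' by (rule smooth_class_reeb_rel)
  then have "connected_component_of lifted_level (lift_point p) (lift_point ?p)"
    using lift_point_smoothed_level(2)[OF zB p] by (rule lift_point_connected)
  then have "connected_component_of lifted_level (lift_point p) = connected_component_of lifted_level (lift_point ?p)"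
    by (subst (asm) connected_component_of_equiv) (elim conjE)
  then show ?thesis
    by (simp only: lift_component_def z fst_conv)
qed

definition lift_preimage :: "('a \<times> real) set \<Rightarrow> ('a \<times> real) set" where
  "lift_preimage D = {q \<in> topspace (thicken X \<epsilon>). \<bar>c - thicken_fun F q\<bar> \<le> \<delta> \<and> lift_point q \<in> D}"

lemma closedin_lift_preimage:
  assumes "closedin lifted_level D"
  shows "closedin (thicken X \<epsilon>) (lift_preimage D)"
proof -
  define band where "band = {p \<in> topspace (thicken X \<epsilon>). thicken_fun F p \<in> {c - \<delta>..c + \<delta>}}"
  have band: "closedin (thicken X \<epsilon>) band"
    unfolding band_def
    by (rule closedin_continuous_map_preimage[OF continuous_map_thicken_fun[OF continuous_F]]) simp
  have "continuous_map (subtopology (thicken X \<epsilon>) band) lifted_level lift_point"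
  proof -
    have fst: "continuous_map (subtopology (thicken X \<epsilon>) band) X fst"
      unfolding thicken_def by (intro continuous_map_from_subtopology continuous_map_fst)
    have "continuous_map (subtopology (thicken X \<epsilon>) band) euclideanreal (\<lambda>p. c - F (fst p))"
      by (intro continuous_map_diff continuous_map_compose[OF fst continuous_F, unfolded o_def]) simp
    moreover have "(\<lambda>p. c - F (fst p)) ` topspace (subtopology (thicken X \<epsilon>) band) \<subseteq> {-(\<epsilon> + \<delta>)..\<epsilon> + \<delta>}"
      by (auto simp: band_def topspace_thicken abs_le_iff)
    ultimately have "continuous_map (subtopology (thicken X \<epsilon>) band) (thicken X (\<epsilon> + \<delta>)) lift_point"
      unfolding thicken_def lift_point_def
      by (intro continuous_map_pairedI fst[unfolded thicken_def])
        (simp add: continuous_map_in_subtopology image_subset_iff_funcset)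
    moreover have "lift_point ` topspace (subtopology (thicken X \<epsilon>) band)
        \<subseteq> level_set (thicken X (\<epsilon> + \<delta>)) (thicken_fun F) c"
      by (auto simp: band_def level_set_def topspace_thicken lift_point_def abs_le_iff)
    ultimately show ?thesis
      by (simp add: continuous_map_in_subtopology image_subset_iff_funcset)
  qed
  then have "closedin (subtopology (thicken X \<epsilon>) band)
      {p \<in> topspace (subtopology (thicken X \<epsilon>) band). lift_point p \<in> D}"
    using assms by (rule closedin_continuous_map_preimage)
  moreover have "{p \<in> topspace (subtopology (thicken X \<epsilon>) band). lift_point p \<in> D} = lift_preimage D"
    by (auto simp: band_def lift_preimage_def abs_le_iff)
  ultimately show ?thesis
    using band by (metis closedin_trans_full)
qed

lemma lift_preimage_saturated:
  assumes "D \<in> connected_components_of lifted_level" "q \<in> lift_preimage D"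
    and "reeb_rel (thicken X \<epsilon>) (thicken_fun F) q q'"
  shows "q' \<in> lift_preimage D"
proof -
  have band: "\<bar>c - thicken_fun F q\<bar> \<le> \<delta>" and "lift_point q \<in> D"
    using assms(2) by (simp_all add: lift_preimage_def)
  from this(2) assms(1) have "D = connected_component_of_set lifted_level (lift_point q)"
    by (rule connected_components_of_eq_component)
  then have "lift_point q' \<in> D"
    using lift_point_connected[OF assms(3) band] by simp
  then show ?thesis
    using assms(2) reeb_rel_imp_topspace[OF assms(3)] by (simp add: lift_preimage_def)
qed

lemma closedin_classes_in_lift_preimage:
  assumes "D \<in> connected_components_of lifted_level"
  shows "closedin (smooth X F \<epsilon>) {B \<in> topspace (smooth X F \<epsilon>). B \<subseteq> lift_preimage D}"
proof -
  let ?W = "{B \<in> topspace (smooth X F \<epsilon>). B \<subseteq> lift_preimage D}"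
  have "\<Union>?W = lift_preimage D"
  proof (intro subset_antisym subsetI)
    fix q assume q: "q \<in> lift_preimage D"
    let ?B = "reeb_class (thicken X \<epsilon>) (thicken_fun F) q"
    have "?B \<subseteq> lift_preimage D"
      using lift_preimage_saturated[OF assms q] by (auto simp: mem_reeb_class)
    moreover have "?B \<in> topspace (smooth X F \<epsilon>)" "q \<in> ?B"
      using q reeb_class_self[of q] by (auto simp: lift_preimage_def topspace_smooth)
    ultimately show "q \<in> \<Union>?W"
      by blast
  qed auto
  moreover have "closedin (thicken X \<epsilon>) (lift_preimage D)"
    using assms by (intro closedin_lift_preimage closedin_connected_components_of)
  ultimately show ?thesis
    unfolding smooth_def by (intro closedin_reeb_top) (auto simp: topspace_reeb_top)
qed

lemma lift_component_mem_components:
  assumes "z \<in> smoothed_level"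
  shows "lift_component z \<in> connected_components_of lifted_level"
proof -
  obtain p where p: "p \<in> fst z"
    using assms by (rule smoothed_level_nonempty)
  then show ?thesis
    using assms lift_component_eq[OF assms p] lift_point_smoothed_level(3)[of "fst z" "snd z" p]
    by (simp add: connected_component_in_connected_components_of)
qed

lemma lift_component_eq_iff:
  assumes "(B, b) \<in> smoothed_level" "D \<in> connected_components_of lifted_level"
  shows "lift_component (B, b) = D \<longleftrightarrow> B \<subseteq> lift_preimage D"
proof
  assume D: "lift_component (B, b) = D"
  show "B \<subseteq> lift_preimage D"
  proof
    fix q assume q: "q \<in> B"
    have "lift_point q \<in> D"
      using D lift_component_eq[OF assms(1)] q lift_point_smoothed_level(3)[OF assms(1) q]
      by (auto simp: connected_component_of_refl)
    moreover have "B \<in> topspace (smooth X F \<epsilon>)"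
      using assms(1) by (simp add: mem_smoothed_level)
    then have "q \<in> topspace (thicken X \<epsilon>)"
      using smooth_class_subset_topspace q by blast
    ultimately show "q \<in> lift_preimage D"
      using lift_point_smoothed_level(2)[OF assms(1) q] by (simp add: lift_preimage_def)
  qed
next
  assume B: "B \<subseteq> lift_preimage D"
  obtain q where q: "q \<in> B"
    using smoothed_level_nonempty[OF assms(1)] by auto
  then have "lift_point q \<in> D"
    using B by (auto simp: lift_preimage_def)
  then show "lift_component (B, b) = D"
    using lift_component_eq[OF assms(1)] q connected_components_of_eq_component[OF _ assms(2)] by simp
qed

lemma closedin_lift_component_fibre:
  assumes "z \<in> smoothed_level"
  shows "closedin (subtopology (thicken (smooth X F \<epsilon>) \<delta>) smoothed_level)
           {z' \<in> smoothed_level. lift_component z' = lift_component z}"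
proof -
  define D where "D = lift_component z"
  let ?W = "{B \<in> topspace (smooth X F \<epsilon>). B \<subseteq> lift_preimage D}"
  have D: "D \<in> connected_components_of lifted_level"
    unfolding D_def using assms by (rule lift_component_mem_components)
  then have "closedin (smooth X F \<epsilon>) ?W"
    by (rule closedin_classes_in_lift_preimage)
  then have "closedin (thicken (smooth X F \<epsilon>) \<delta>) (?W \<times> {-\<delta>..\<delta>})"
    unfolding thicken_def by (simp add: closedin_prod_Times_iff)
  moreover have "{z' \<in> smoothed_level. lift_component z' = D} = (?W \<times> {-\<delta>..\<delta>}) \<inter> smoothed_level"
  proof (intro set_eqI)
    fix z' :: "('a \<times> real) set \<times> real"
    obtain B b where z': "z' = (B, b)" by fastforce
    show "z' \<in> {z' \<in> smoothed_level. lift_component z' = D} \<longleftrightarrow> z' \<in> (?W \<times> {-\<delta>..\<delta>}) \<inter> smoothed_level"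
      unfolding z' using lift_component_eq_iff[OF _ D, of B b] mem_smoothed_level[of B b] by blast
  qed
  ultimately show ?thesis
    unfolding D_def closedin_subtopology by (intro exI conjI)
qed

lemma lift_component_eq_if_reeb_rel:
  assumes "finite (connected_components_of lifted_level)"
    and "reeb_rel (thicken (smooth X F \<epsilon>) \<delta>) (thicken_fun (smooth_fun F)) z z'"
    and "thicken_fun (smooth_fun F) z = c"
  shows "lift_component z = lift_component z'"
proof -
  let ?L = "subtopology (thicken (smooth X F \<epsilon>) \<delta>) smoothed_level"
  have top: "topspace ?L = smoothed_level"
    by (auto simp: level_set_def)
  have "lift_component ` smoothed_level \<subseteq> connected_components_of lifted_level"
    using lift_component_mem_components by blast
  then have "finite (lift_component ` topspace ?L)"
    unfolding top using assms(1) by (rule finite_subset)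
  moreover have "closedin ?L {y \<in> topspace ?L. lift_component y = lift_component x}"
    if "x \<in> topspace ?L" for x
    using that closedin_lift_component_fibre unfolding top by simp
  moreover have "connected_component_of ?L z z'"
    using assms(2) unfolding reeb_rel_iff assms(3) by (elim conjE)
  ultimately show ?thesis
    by (rule connected_component_of_imp_eq_finite_closed_fibres)
qed

end

definition finite_thickened_level_components :: "'a topology \<Rightarrow> ('a \<Rightarrow> real) \<Rightarrow> bool" where
  "finite_thickened_level_components X F \<longleftrightarrow>
     (\<forall>\<eta> c. finite (connected_components_of
        (subtopology (thicken X \<eta>) (level_set (thicken X \<eta>) (thicken_fun F) c))))"

lemma reeb_rel_iterated_smoothing:
  assumes "continuous_map X euclideanreal F" "finite_thickened_level_components X F"
    and "reeb_rel (thicken (smooth X F \<epsilon>) \<delta>) (thicken_fun (smooth_fun F)) (A, a) (B, b)"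
    and "(x, s) \<in> A" "(y, r) \<in> B"
  shows "reeb_rel (thicken X (\<epsilon> + \<delta>)) (thicken_fun F) (x, s + a) (y, r + b)"
proof -
  define c where "c = smooth_fun F A + a"
  interpret level_lift X F \<epsilon> \<delta> c
    using assms(1) by unfold_locales
  have A: "(A, a) \<in> smoothed_level" and B: "(B, b) \<in> smoothed_level"
    using reeb_rel_imp_topspace[OF assms(3)] by (simp_all add: level_set_def c_def)
  have "lift_component (A, a) = lift_component (B, b)"
    using assms(2) by (intro lift_component_eq_if_reeb_rel[OF _ assms(3)])
      (simp_all add: finite_thickened_level_components_def c_def)
  moreover have "lift_component (A, a) = connected_component_of_set lifted_level (x, s + a)"
    using lift_component_eq[OF A, of "(x, s)"] lift_point_smoothed_level(1)[OF A assms(4)]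
      assms(4) by simp
  moreover have "lift_component (B, b) = connected_component_of_set lifted_level (y, r + b)"
    using lift_component_eq[OF B, of "(y, r)"] lift_point_smoothed_level(1)[OF B assms(5)]
      assms(5) by simp
  moreover have xs: "(x, s + a) \<in> topspace lifted_level"
    using lift_point_smoothed_level(1,3)[OF A assms(4)] by simp
  ultimately have cc: "connected_component_of lifted_level (x, s + a) (y, r + b)"
    using connected_component_of_set_eq_iff[OF xs] by simp
  have ys: "(y, r + b) \<in> topspace lifted_level"
    using connected_component_in_topspace[OF cc] ..
  have "thicken_fun F (x, s + a) = c" "thicken_fun F (y, r + b) = c"
    and "(x, s + a) \<in> topspace (thicken X (\<epsilon> + \<delta>))" "(y, r + b) \<in> topspace (thicken X (\<epsilon> + \<delta>))"
    using xs ys unfolding topspace_subtopology level_set_def by blast+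
  then show ?thesis
    using cc unfolding reeb_rel_iff by presburger
qed

lemma ident_proj:
  assumes "continuous_map X euclideanreal F" "finite_thickened_level_components X F"
    and "(A, a) \<in> topspace (thicken (smooth X F \<epsilon>) \<delta>)" "(x, s) \<in> A"
  shows "ident X F \<epsilon> \<delta> (proj (smooth X F \<epsilon>) (smooth_fun F) \<delta> A a) = proj X F (\<epsilon> + \<delta>) x (s + a)"
proof -
  let ?Q = "proj (smooth X F \<epsilon>) (smooth_fun F) \<delta> A a"
  define z where "z = (SOME z. z \<in> ?Q)"
  define p where "p = (SOME p. p \<in> fst z)"
  have "(A, a) \<in> ?Q"
    unfolding proj_def using assms(3) by (rule reeb_class_self)
  then have "z \<in> ?Q"
    unfolding z_def by (rule someI)
  then have rz: "reeb_rel (thicken (smooth X F \<epsilon>) \<delta>) (thicken_fun (smooth_fun F)) (A, a) (fst z, snd z)"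
    by (simp add: proj_def mem_reeb_class)
  then have "fst z \<in> topspace (smooth X F \<epsilon>)"
    using reeb_rel_imp_topspace[OF rz] by (auto simp: topspace_thicken mem_Times_iff)
  then obtain q where "q \<in> fst z"
    using smooth_class_nonempty by blast
  then have "p \<in> fst z"
    unfolding p_def by (rule someI)
  then have "(fst p, snd p) \<in> fst z"
    by simp
  with rz have "reeb_rel (thicken X (\<epsilon> + \<delta>)) (thicken_fun F) (x, s + a) (fst p, snd p + snd z)"
    by (rule reeb_rel_iterated_smoothing[OF assms(1,2) _ assms(4)])
  then show ?thesis
    unfolding ident_def Let_def z_def[symmetric] p_def[symmetric] unfolding proj_def
    by (rule reeb_class_eq[symmetric])
qed

lemma smooth_morph_proj:
  assumes "morphism X1 F1 (smooth X2 F2 \<epsilon>) (smooth_fun F2) \<phi>" "(x, t) \<in> topspace (thicken X1 \<delta>)"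
  shows "smooth_morph X1 F1 X2 F2 \<epsilon> \<delta> \<phi> (proj X1 F1 \<delta> x t)
           = ident X2 F2 \<epsilon> \<delta> (proj (smooth X2 F2 \<epsilon>) (smooth_fun F2) \<delta> (\<phi> x) t)"
proof -
  define z where "z = (SOME z. z \<in> proj X1 F1 \<delta> x t)"
  define H where "H = (\<lambda>p :: _ \<times> real. (\<phi> (fst p), snd p))"
  have "(x, t) \<in> proj X1 F1 \<delta> x t"
    unfolding proj_def using assms(2) by (rule reeb_class_self)
  then have "z \<in> proj X1 F1 \<delta> x t"
    unfolding z_def by (rule someI)
  then have rz: "reeb_rel (thicken X1 \<delta>) (thicken_fun F1) (x, t) z"
    by (simp add: proj_def mem_reeb_class)
  have "continuous_map (thicken X1 \<delta>) (thicken (smooth X2 F2 \<epsilon>) \<delta>) H"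
    using assms(1) unfolding thicken_def H_def morphism_def
    by (intro continuous_map_pairedI continuous_map_snd
        continuous_map_compose[OF continuous_map_fst, unfolded o_def]) auto
  moreover have "thicken_fun (smooth_fun F2) (H p) = thicken_fun F1 p + 0"
    if "p \<in> topspace (thicken X1 \<delta>)" for p
    using that assms(1) by (auto simp: H_def topspace_thicken morphism_def thicken_fun_def case_prod_unfold)
  ultimately have "reeb_rel (thicken (smooth X2 F2 \<epsilon>) \<delta>) (thicken_fun (smooth_fun F2)) (H (x, t)) (H z)"
    using rz by (rule reeb_rel_continuous_map)
  then show ?thesis
    unfolding smooth_morph_def Let_def z_def[symmetric] unfolding proj_def
    by (simp add: H_def reeb_class_eq)
qed

lemma smooth_morph_proj_eq:
  assumes "continuous_map X2 euclideanreal F2" "finite_thickened_level_components X2 F2"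
    and "morphism X1 F1 (smooth X2 F2 \<epsilon>) (smooth_fun F2) \<phi>"
    and "(x, \<tau>) \<in> topspace (thicken X1 \<delta>)" "(y, t) \<in> \<phi> x"
  shows "smooth_morph X1 F1 X2 F2 \<epsilon> \<delta> \<phi> (proj X1 F1 \<delta> x \<tau>) = proj X2 F2 (\<epsilon> + \<delta>) y (t + \<tau>)"
proof -
  have "\<phi> x \<in> topspace (smooth X2 F2 \<epsilon>)"
    using assms(3,4) by (auto simp: morphism_def continuous_map_def topspace_thicken)
  then have "(\<phi> x, \<tau>) \<in> topspace (thicken (smooth X2 F2 \<epsilon>) \<delta>)"
    using assms(4) by (simp add: topspace_thicken)
  then show ?thesis
    unfolding smooth_morph_proj[OF assms(3,4)] by (rule ident_proj[OF assms(1,2) _ assms(5)])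
qed

lemma proj_mem_ident_Pset:
  assumes "continuous_map X euclideanreal F" "finite_thickened_level_components X F"
    and "(y, \<tau>) \<in> topspace (thicken X \<delta>)" "t \<in> {-\<epsilon>..\<epsilon>}"
  shows "proj X F (\<epsilon> + \<delta>) y (t + \<tau>)
           \<in> ident X F \<delta> \<epsilon> ` Pset (smooth X F \<delta>) (smooth_fun F) \<epsilon> (proj X F \<delta> y \<tau>)"
proof -
  let ?A = "proj X F \<delta> y \<tau>"
  have "?A \<in> topspace (smooth X F \<delta>)" "(y, \<tau>) \<in> ?A"
    using assms(3) reeb_class_self[OF assms(3)] by (simp_all add: proj_def topspace_smooth)
  then have "ident X F \<delta> \<epsilon> (proj (smooth X F \<delta>) (smooth_fun F) \<epsilon> ?A t) = proj X F (\<delta> + \<epsilon>) y (\<tau> + t)"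
    using assms(4) by (intro ident_proj[OF assms(1,2)]) (simp_all add: topspace_thicken)
  moreover have "proj (smooth X F \<delta>) (smooth_fun F) \<epsilon> ?A t \<in> Pset (smooth X F \<delta>) (smooth_fun F) \<epsilon> ?A"
    using assms(4) by (auto simp: Pset_def)
  ultimately show ?thesis
    by (metis add.commute image_eqI)
qed

section \<open>Reeb graphs\<close>

lemma emb_mem_rcarrier:
  assumes "reeb_graph R" "e \<in> edges R" "h \<in> {ht R (lo R e)..ht R (hi R e)}"
  shows "emb R e h \<in> rcarrier R"
  using assms by (auto simp: emb_def rcarrier_def reeb_graph_def)

lemma fval_emb [simp]: "fval R (emb R e h) = h"
  by (simp add: emb_def)

lemma istopology_reeb_space:
  "istopology (\<lambda>U. U \<subseteq> rcarrier R \<and>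
     (\<forall>e\<in>edges R. openin (top_of_set {ht R (lo R e)..ht R (hi R e)})
        {h \<in> {ht R (lo R e)..ht R (hi R e)}. emb R e h \<in> U}))"
  unfolding istopology_def
proof (rule conjI; intro allI impI)
  fix S T :: "('a, 'b) rpt set"
  have "{h \<in> {ht R (lo R e)..ht R (hi R e)}. emb R e h \<in> S \<inter> T} =
      {h \<in> {ht R (lo R e)..ht R (hi R e)}. emb R e h \<in> S} \<inter> {h \<in> {ht R (lo R e)..ht R (hi R e)}. emb R e h \<in> T}"
    for e by auto
  then show "S \<inter> T \<subseteq> rcarrier R \<and> (\<forall>e\<in>edges R. openin (top_of_set {ht R (lo R e)..ht R (hi R e)})
        {h \<in> {ht R (lo R e)..ht R (hi R e)}. emb R e h \<in> S \<inter> T})"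
    if "S \<subseteq> rcarrier R \<and> (\<forall>e\<in>edges R. openin (top_of_set {ht R (lo R e)..ht R (hi R e)})
          {h \<in> {ht R (lo R e)..ht R (hi R e)}. emb R e h \<in> S})"
      "T \<subseteq> rcarrier R \<and> (\<forall>e\<in>edges R. openin (top_of_set {ht R (lo R e)..ht R (hi R e)})
          {h \<in> {ht R (lo R e)..ht R (hi R e)}. emb R e h \<in> T})"
    using that by (auto intro!: openin_Int)
next
  fix K :: "('a, 'b) rpt set set"
  have "{h \<in> {ht R (lo R e)..ht R (hi R e)}. emb R e h \<in> \<Union>K} =
      \<Union>((\<lambda>S. {h \<in> {ht R (lo R e)..ht R (hi R e)}. emb R e h \<in> S}) ` K)"
    for e by auto
  then show "\<Union>K \<subseteq> rcarrier R \<and> (\<forall>e\<in>edges R. openin (top_of_set {ht R (lo R e)..ht R (hi R e)})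
        {h \<in> {ht R (lo R e)..ht R (hi R e)}. emb R e h \<in> \<Union>K})"
    if "\<forall>S\<in>K. S \<subseteq> rcarrier R \<and> (\<forall>e\<in>edges R. openin (top_of_set {ht R (lo R e)..ht R (hi R e)})
          {h \<in> {ht R (lo R e)..ht R (hi R e)}. emb R e h \<in> S})"
    using that by (auto intro!: openin_Union)
qed

lemma openin_reeb_space:
  "openin (reeb_space R) U \<longleftrightarrow> U \<subseteq> rcarrier R \<and>
     (\<forall>e\<in>edges R. openin (top_of_set {ht R (lo R e)..ht R (hi R e)})
        {h \<in> {ht R (lo R e)..ht R (hi R e)}. emb R e h \<in> U})"
  by (simp only: reeb_space_def topology_inverse'[OF istopology_reeb_space])

lemma topspace_reeb_space:
  assumes "reeb_graph R"
  shows "topspace (reeb_space R) = rcarrier R"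
proof -
  have "{h \<in> {ht R (lo R e)..ht R (hi R e)}. emb R e h \<in> rcarrier R} = {ht R (lo R e)..ht R (hi R e)}"
    if "e \<in> edges R" for e
    using emb_mem_rcarrier[OF assms that] by auto
  then have "openin (reeb_space R) (rcarrier R)"
    unfolding openin_reeb_space by simp
  moreover have "S \<subseteq> rcarrier R" if "openin (reeb_space R) S" for S
    using that by (simp add: openin_reeb_space)
  ultimately show ?thesis
    unfolding topspace_def by (intro subset_antisym Union_least Union_upper) auto
qed

lemma Nd_mem_topspace_thicken:
  "\<lbrakk>reeb_graph R; v \<in> nodes R; \<bar>t\<bar> \<le> \<eta>\<rbrakk> \<Longrightarrow> (Nd v, t) \<in> topspace (thicken (reeb_space R) \<eta>)"
  by (auto simp: topspace_thicken topspace_reeb_space rcarrier_def abs_le_iff)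

lemma continuous_map_fval:
  assumes "reeb_graph R"
  shows "continuous_map (reeb_space R) euclideanreal (fval R)"
  unfolding continuous_map_def
proof (intro conjI allI impI)
  fix U :: "real set" assume "openin euclideanreal U"
  moreover have "{h \<in> {ht R (lo R e)..ht R (hi R e)}. emb R e h \<in> {x \<in> rcarrier R. fval R x \<in> U}}
      = {ht R (lo R e)..ht R (hi R e)} \<inter> U" if "e \<in> edges R" for e
    using emb_mem_rcarrier[OF assms that] by auto
  ultimately show "openin (reeb_space R) {x \<in> topspace (reeb_space R). fval R x \<in> U}"
    unfolding openin_reeb_space topspace_reeb_space[OF assms]
    by (auto simp: openin_open_Int)
qed simp

lemma continuous_map_emb:
  assumes "reeb_graph R" "e \<in> edges R"
  shows "continuous_map (top_of_set {ht R (lo R e)..ht R (hi R e)}) (reeb_space R) (emb R e)"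
  using assms emb_mem_rcarrier[OF assms]
  by (auto simp: continuous_map_def openin_reeb_space topspace_reeb_space[OF assms(1)])

definition level_edge_arc :: "('v, 'e) reeb \<Rightarrow> real \<Rightarrow> real \<Rightarrow> 'e \<Rightarrow> (('v, 'e) rpt \<times> real) set" where
  "level_edge_arc R \<eta> c e =
     (\<lambda>h. (emb R e h, c - h)) ` ({ht R (lo R e)..ht R (hi R e)} \<inter> {c - \<eta>..c + \<eta>})"

lemma connectedin_level_edge_arc:
  assumes R: "reeb_graph R" and e: "e \<in> edges R"
  shows "connectedin (subtopology (thicken (reeb_space R) \<eta>)
           (level_set (thicken (reeb_space R) \<eta>) (thicken_fun (fval R)) c)) (level_edge_arc R \<eta> c e)"
  unfolding level_edge_arc_def
proof (rule connectedin_continuous_map_image)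
  define K where "K = {ht R (lo R e)..ht R (hi R e)} \<inter> {c - \<eta>..c + \<eta>}"
  have "K = {max (ht R (lo R e)) (c - \<eta>)..min (ht R (hi R e)) (c + \<eta>)}"
    by (auto simp: K_def)
  then show "connectedin (top_of_set K) K"
    by (simp add: connectedin_subtopology)
  have "continuous_map (top_of_set K) (reeb_space R) (emb R e)"
    using continuous_map_from_subtopology[OF continuous_map_emb[OF R e], of K]
    by (simp add: subtopology_subtopology K_def Int_absorb1)
  moreover have "continuous_map (top_of_set K) (top_of_set {-\<eta>..\<eta>}) (\<lambda>h. c - h)"
    by (auto simp: continuous_map_in_subtopology K_def intro!: continuous_intros)
  ultimately have "continuous_map (top_of_set K) (thicken (reeb_space R) \<eta>) (\<lambda>h. (emb R e h, c - h))"
    unfolding thicken_def by (rule continuous_map_pairedI)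
  moreover have "(\<lambda>h. (emb R e h, c - h)) ` topspace (top_of_set K)
      \<subseteq> level_set (thicken (reeb_space R) \<eta>) (thicken_fun (fval R)) c"
    using emb_mem_rcarrier[OF R e]
    by (auto simp: K_def level_set_def topspace_thicken topspace_reeb_space[OF R])
  ultimately show "continuous_map (top_of_set K) (subtopology (thicken (reeb_space R) \<eta>)
      (level_set (thicken (reeb_space R) \<eta>) (thicken_fun (fval R)) c)) (\<lambda>h. (emb R e h, c - h))"
    by (simp add: continuous_map_in_subtopology image_subset_iff_funcset K_def)
qed

lemma level_set_thicken_reeb_space_subset:
  assumes R: "reeb_graph R"
  shows "level_set (thicken (reeb_space R) \<eta>) (thicken_fun (fval R)) c
           \<subseteq> (\<Union>v\<in>nodes R. {(Nd v, c - ht R v)}) \<union> (\<Union>e\<in>edges R. level_edge_arc R \<eta> c e)"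
proof
  fix w assume w: "w \<in> level_set (thicken (reeb_space R) \<eta>) (thicken_fun (fval R)) c"
  obtain x u where wu: "w = (x, u)" by fastforce
  have x: "x \<in> rcarrier R" "\<bar>u\<bar> \<le> \<eta>" "fval R x + u = c"
    using w wu by (auto simp: level_set_def topspace_thicken topspace_reeb_space[OF R])
  show "w \<in> (\<Union>v\<in>nodes R. {(Nd v, c - ht R v)}) \<union> (\<Union>e\<in>edges R. level_edge_arc R \<eta> c e)"
  proof (cases x)
    case (Nd v)
    then show ?thesis
      using x wu by (auto simp: rcarrier_def)
  next
    case (Ed e h)
    then have eh: "e \<in> edges R" "ht R (lo R e) < h" "h < ht R (hi R e)"
      using x(1) by (auto simp: rcarrier_def)
    then have "emb R e h = x" "u = c - h"
      using x(3) Ed by (simp_all add: emb_def)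
    then have "w \<in> level_edge_arc R \<eta> c e"
      using eh x(2) wu unfolding level_edge_arc_def by (intro image_eqI[of _ _ h]) auto
    then show ?thesis
      using eh(1) by blast
  qed
qed

lemma finite_thickened_level_components_reeb_space:
  assumes R: "reeb_graph R"
  shows "finite_thickened_level_components (reeb_space R) (fval R)"
  unfolding finite_thickened_level_components_def
proof (intro allI)
  fix \<eta> c :: real
  let ?L = "level_set (thicken (reeb_space R) \<eta>) (thicken_fun (fval R)) c"
  let ?P = "(\<lambda>v. {(Nd v, c - ht R v)} \<inter> ?L) ` nodes R \<union> level_edge_arc R \<eta> c ` edges R"
  show "finite (connected_components_of (subtopology (thicken (reeb_space R) \<eta>) ?L))"
  proof (rule finite_connected_components_of_connected_cover)
    show "finite ?P"
      using R by (simp add: reeb_graph_def)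
    show "connectedin (subtopology (thicken (reeb_space R) \<eta>) ?L) C" if "C \<in> ?P" for C
      using that connectedin_level_edge_arc[OF R]
      by (auto simp: level_set_def Int_insert_left)
    show "topspace (subtopology (thicken (reeb_space R) \<eta>) ?L) \<subseteq> \<Union>?P"
      using level_set_thicken_reeb_space_subset[OF R] by (auto simp: level_set_def)
  qed
qed

theorem lemma5:
  fixes R1 :: "('v1,'e1) reeb" and R2 :: "('v2,'e2) reeb"
    and \<epsilon> \<delta> :: real and v1 :: 'v1 and v2 :: 'v2
    and \<phi> :: "('v1,'e1) rpt \<Rightarrow> (('v2,'e2) rpt \<times> real) set"
  assumes "reeb_graph R1" and "reeb_graph R2"
    and "\<epsilon> \<ge> 0"
    and "v1 \<in> nodes R1" and "v2 \<in> nodes R2"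
    and "(max_or_split R1 v1 \<and> max_or_split R2 v2) \<or> (min_or_join R1 v1 \<and> min_or_join R2 v2)"
    and "morphism (reeb_space R1) (fval R1) (smooth (reeb_space R2) (fval R2) \<epsilon>) (smooth_fun (fval R2)) \<phi>"
    and "\<phi> (Nd v1) \<in> Pset (reeb_space R2) (fval R2) \<epsilon> (Nd v2)"
    and "\<delta> \<ge> 0"
  shows "smooth_morph (reeb_space R1) (fval R1) (reeb_space R2) (fval R2) \<epsilon> \<delta> \<phi> (sdelta R1 \<delta> v1)
         \<in> ident (reeb_space R2) (fval R2) \<delta> \<epsilon>
             ` Pset (smooth (reeb_space R2) (fval R2) \<delta>) (smooth_fun (fval R2)) \<epsilon> (sdelta R2 \<delta> v2)"
proof -
  define \<tau> where "\<tau> = (if max_or_split R1 v1 then \<delta> else -\<delta>)"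
  have "max_or_split R2 v2 \<longleftrightarrow> max_or_split R1 v1"
    using assms(6) unfolding max_or_split_def min_or_join_def by auto
  then have s1: "sdelta R1 \<delta> v1 = proj (reeb_space R1) (fval R1) \<delta> (Nd v1) \<tau>"
    and s2: "sdelta R2 \<delta> v2 = proj (reeb_space R2) (fval R2) \<delta> (Nd v2) \<tau>"
    by (simp_all add: sdelta_def \<tau>_def)
  have "\<bar>\<tau>\<bar> \<le> \<delta>"
    using assms(9) by (simp add: \<tau>_def)
  then have v1: "(Nd v1, \<tau>) \<in> topspace (thicken (reeb_space R1) \<delta>)"
    and v2: "(Nd v2, \<tau>) \<in> topspace (thicken (reeb_space R2) \<delta>)"
    using assms(1,2,4,5) by (simp_all add: Nd_mem_topspace_thicken)
  obtain t where t: "t \<in> {-\<epsilon>..\<epsilon>}" "\<phi> (Nd v1) = proj (reeb_space R2) (fval R2) \<epsilon> (Nd v2) t"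
    using assms(8) by (auto simp: Pset_def)
  moreover from t(1) have "(Nd v2, t) \<in> topspace (thicken (reeb_space R2) \<epsilon>)"
    using assms(2,5) by (simp add: Nd_mem_topspace_thicken abs_le_iff)
  ultimately have "(Nd v2, t) \<in> \<phi> (Nd v1)"
    by (simp add: proj_def reeb_class_self)
  note R2 = continuous_map_fval[OF assms(2)] finite_thickened_level_components_reeb_space[OF assms(2)]
  have "smooth_morph (reeb_space R1) (fval R1) (reeb_space R2) (fval R2) \<epsilon> \<delta> \<phi> (sdelta R1 \<delta> v1)
      = proj (reeb_space R2) (fval R2) (\<epsilon> + \<delta>) (Nd v2) (t + \<tau>)"
    unfolding s1 using R2 assms(7) v1 \<open>(Nd v2, t) \<in> \<phi> (Nd v1)\<close> by (rule smooth_morph_proj_eq)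
  then show ?thesis
    unfolding s2 using proj_mem_ident_Pset[OF R2 v2 t(1)] by simp
qed

end
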